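(* Let $M$ be a common memory consistency model and $X$ an execution. For every relation $r$ defined in $M$ (evaluated on $X$) and all events $e_1, e_2$ of $X$: if $(e_1,e_2)\in r$, then $(e_1, e_2) \in b^*$, where $b := po\cup rf\cup co\cup ad\cup dd\cup cd\cup fr$ and $b^*$ is its reflexive-transitive closure (i.e. there is a path, possibly of length $0$, from $e_1$ to $e_2$ consisting of $b$-edges).
   Context: An execution $X$ consists of executed memory events (reads and writes, with an initial write per location), the program order $po$, address/data/control dependencies $ad, dd, cd\subseteq po$, fence relations (each $\subseteq po$), relations $sthd$ (same thread) and $sloc$ (same location), reads-from $rf$ and coherence order $co$; $fr := rf^{-1};co$. A memory consistency model in the core CAT language is a finite set of named relation definitions $\mathit{name} := t$, where terms $t$ are built from $po, rf, co, ad, dd, cd, sthd, sloc$, fence relations, $id(S)$ and $S\times S$ for event sets $S\in\{E,R,W\}$, and names, using $\cup,\cap,\setminus,^{-1},^+,^*,;$ (relational composition); mutually recursive definitions are interpreted as their least solution (obtained by Kleene iteration from empty relations); plus axioms $\mathrm{acyclic}(t)$ / $\mathrm{irreflexive}(t)$. SC is the model with the single axiom $\mathrm{acyclic}(po\cup rf\cup co\cup fr)$. A model is common if (i) the inverse operator is used only in the definition $fr := rf^{-1};co$; (ii) $sthd$, $sloc$ and $S\times S$ are only used intersected with other relations; (iii) it includes uniproc: $\mathrm{acyclic}((po\cap sloc)\cup rf\cup fr\cup co)$; (iv) every program is portable from it to SC (every execution consistent with it is SC-consistent). *)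

theory Defs
  imports Main
begin

datatype evset = SetE | SetR | SetW

record 'e execution =
  ev    :: "'e set"
  rd    :: "'e set"
  wr    :: "'e set"            (* writes W (incl. initial writes) *)
  init  :: "'e set"
  loc   :: "'e \<Rightarrow> nat"
  po    :: "'e rel"
  ad    :: "'e rel"
  dd    :: "'e rel"
  cd    :: "'e rel"
  fence :: "string \<Rightarrow> 'e rel"
  sthd  :: "'e rel"
  sloc  :: "'e rel"
  rf    :: "'e rel"
  co    :: "'e rel"

definition fr :: "'e execution \<Rightarrow> 'e rel" where
  "fr X = (rf X)\<inverse> O co X"

definition wf_exec :: "'e execution \<Rightarrow> bool" where
  "wf_exec X \<longleftrightarrow>
     ev X = rd X \<union> wr X \<and> rd X \<inter> wr X = {} \<and>
     init X \<subseteq> wr X \<and>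
     (\<forall>e \<in> ev X. \<exists>!i. i \<in> init X \<and> loc X i = loc X e) \<and>
     po X \<subseteq> ev X \<times> ev X \<and>
     ad X \<subseteq> po X \<and> dd X \<subseteq> po X \<and> cd X \<subseteq> po X \<and>
     (\<forall>f. fence X f \<subseteq> po X) \<and>
     sthd X \<subseteq> ev X \<times> ev X \<and>
     sloc X = {(a, b). a \<in> ev X \<and> b \<in> ev X \<and> loc X a = loc X b} \<and>
     rf X \<subseteq> (wr X \<times> rd X) \<inter> sloc X \<and>
     co X \<subseteq> (wr X \<times> wr X) \<inter> sloc X"

definition evs :: "'e execution \<Rightarrow> evset \<Rightarrow> 'e set" where
  "evs X S = (case S of SetE \<Rightarrow> ev X | SetR \<Rightarrow> rd X | SetW \<Rightarrow> wr X)"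

datatype cat =
    Po | Rf | Co | Ad | Dd | Cd | Sthd | Sloc | Fence string
  | IdS evset | Prod evset | Name string
  | CUn cat cat | CInt cat cat | Diff cat cat | Inv cat
  | Plus cat | Star cat | Seq cat cat

datatype axiom = Acyclic cat | Irreflexive cat

record model =
  defs :: "(string \<times> cat) list"
  axioms :: "axiom list"

fun eval :: "(string \<Rightarrow> 'e rel) \<Rightarrow> 'e execution \<Rightarrow> cat \<Rightarrow> 'e rel" where
  "eval \<rho> X Po = po X"
| "eval \<rho> X Rf = rf X"
| "eval \<rho> X Co = co X"
| "eval \<rho> X Ad = ad X"
| "eval \<rho> X Dd = dd X"
| "eval \<rho> X Cd = cd X"
| "eval \<rho> X Sthd = sthd X"
| "eval \<rho> X Sloc = sloc X"
| "eval \<rho> X (Fence f) = fence X f"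
| "eval \<rho> X (IdS S) = Id_on (evs X S)"
| "eval \<rho> X (Prod S) = evs X S \<times> evs X S"
| "eval \<rho> X (Name n) = \<rho> n"
| "eval \<rho> X (CUn a b) = eval \<rho> X a \<union> eval \<rho> X b"
| "eval \<rho> X (CInt a b) = eval \<rho> X a \<inter> eval \<rho> X b"
| "eval \<rho> X (Diff a b) = eval \<rho> X a - eval \<rho> X b"
| "eval \<rho> X (Inv a) = (eval \<rho> X a)\<inverse>"
| "eval \<rho> X (Plus a) = (eval \<rho> X a)\<^sup>+"
| "eval \<rho> X (Star a) = (eval \<rho> X a)\<^sup>+ \<union> Id_on (ev X)"
| "eval \<rho> X (Seq a b) = eval \<rho> X a O eval \<rho> X b"

text \<open>Kleene iteration for the (mutually recursive) definitions, from empty relations.\<close>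
fun kleene :: "model \<Rightarrow> 'e execution \<Rightarrow> nat \<Rightarrow> string \<Rightarrow> 'e rel" where
  "kleene M X 0 = (\<lambda>n. {})"
| "kleene M X (Suc k) = (\<lambda>n. case map_of (defs M) n of
       Some t \<Rightarrow> eval (kleene M X k) X t | None \<Rightarrow> {})"

definition model_env :: "model \<Rightarrow> 'e execution \<Rightarrow> string \<Rightarrow> 'e rel" where
  "model_env M X = kleene M X (LEAST k. kleene M X (Suc k) = kleene M X k)"

definition model_rel :: "model \<Rightarrow> 'e execution \<Rightarrow> string \<Rightarrow> 'e rel" where
  "model_rel M X n = model_env M X n"

fun holds :: "(string \<Rightarrow> 'e rel) \<Rightarrow> 'e execution \<Rightarrow> axiom \<Rightarrow> bool" where
  "holds \<rho> X (Acyclic t) = acyclic (eval \<rho> X t)"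
| "holds \<rho> X (Irreflexive t) = irrefl (eval \<rho> X t)"

definition consistent :: "model \<Rightarrow> 'e execution \<Rightarrow> bool" where
  "consistent M X \<longleftrightarrow> (\<forall>a \<in> set (axioms M). holds (model_env M X) X a)"

definition sc_consistent :: "'e execution \<Rightarrow> bool" where
  "sc_consistent X \<longleftrightarrow> acyclic (po X \<union> rf X \<union> co X \<union> fr X)"

fun inv_free :: "cat \<Rightarrow> bool" where
  "inv_free (Inv a) = False"
| "inv_free (CUn a b) = (inv_free a \<and> inv_free b)"
| "inv_free (CInt a b) = (inv_free a \<and> inv_free b)"
| "inv_free (Diff a b) = (inv_free a \<and> inv_free b)"
| "inv_free (Seq a b) = (inv_free a \<and> inv_free b)"
| "inv_free (Plus a) = inv_free a"
| "inv_free (Star a) = inv_free a"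
| "inv_free _ = True"

text \<open>Guardedness: sthd, sloc and S x S occur only intersected with other
  (non-filter) relations. A filter is built from sthd, sloc, S x S by intersection,
  or is itself a guarded term.\<close>
fun guarded :: "cat \<Rightarrow> bool" and filt :: "cat \<Rightarrow> bool" where
  "guarded Sthd = False"
| "guarded Sloc = False"
| "guarded (Prod S) = False"
| "guarded (CInt a b) = ((guarded a \<and> filt b) \<or> (filt a \<and> guarded b))"
| "guarded (CUn a b) = (guarded a \<and> guarded b)"
| "guarded (Diff a b) = (guarded a \<and> guarded b)"
| "guarded (Seq a b) = (guarded a \<and> guarded b)"
| "guarded (Inv a) = guarded a"
| "guarded (Plus a) = guarded a"
| "guarded (Star a) = guarded a"
| "guarded _ = True"
| "filt Sthd = True"
| "filt Sloc = True"
| "filt (Prod S) = True"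
| "filt (CInt a b) = (filt a \<and> filt b)"
| "filt t = guarded t"

fun axiom_term :: "axiom \<Rightarrow> cat" where
  "axiom_term (Acyclic t) = t"
| "axiom_term (Irreflexive t) = t"

definition fr_term :: cat where
  "fr_term = Seq (Inv Rf) Co"

definition uniproc_axiom :: axiom where
  "uniproc_axiom = Acyclic (CUn (CUn (CUn (CInt Po Sloc) Rf) (Name ''fr'')) Co)"

definition portable_to_SC :: "model \<Rightarrow> ('e execution) itself \<Rightarrow> bool" where
  "portable_to_SC M _ \<longleftrightarrow>
     (\<forall>X :: 'e execution. wf_exec X \<longrightarrow> consistent M X \<longrightarrow> sc_consistent X)"

definition common :: "model \<Rightarrow> ('e execution) itself \<Rightarrow> bool" where
  "common M T \<longleftrightarrow>
     distinct (map fst (defs M)) \<and>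
     \<comment> \<open>(i) inverse only in fr := rf^-1 ; co\<close>
     (\<forall>(n, t) \<in> set (defs M). inv_free t \<or> (n = ''fr'' \<and> t = fr_term)) \<and>
     (\<forall>a \<in> set (axioms M). inv_free (axiom_term a)) \<and>
     \<comment> \<open>(ii) sthd, sloc, S x S only intersected with other relations\<close>
     (\<forall>(n, t) \<in> set (defs M). guarded t) \<and>
     (\<forall>a \<in> set (axioms M). guarded (axiom_term a)) \<and>
     \<comment> \<open>(iii) uniproc\<close>
     (''fr'', fr_term) \<in> set (defs M) \<and> uniproc_axiom \<in> set (axioms M) \<and>
     \<comment> \<open>(iv) portability to SC\<close>
     portable_to_SC M T"

definition bb :: "'e execution \<Rightarrow> 'e rel" where
  "bb X = po X \<union> rf X \<union> co X \<union> ad X \<union> dd X \<union> cd X \<union> fr X"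

end

theory Submission
  imports Defs
begin

text \<open>Every CAT relation is built from base relations by operators that preserve inclusion
  in a reflexive-transitive closure \<open>B\<^sup>*\<close> -- except inverse, which a common model only uses
  in \<open>fr\<close>, and \<open>sthd\<close>, \<open>sloc\<close>, \<open>S \<times> S\<close>, which may only cut down another relation by
  intersection. Hence, if \<open>B\<^sup>*\<close> contains \<open>po, rf, co, ad, dd, cd, fr\<close> and the fences, every
  Kleene iterate of the definitions, in particular their least solution, lies in \<open>B\<^sup>*\<close>.\<close>

lemma eval_subset_rtrancl:
  assumes base: "po X \<union> rf X \<union> co X \<union> ad X \<union> dd X \<union> cd X \<subseteq> B\<^sup>*"
    and fences: "\<And>f. fence X f \<subseteq> B\<^sup>*"
    and env: "\<And>m. \<rho> m \<subseteq> B\<^sup>*"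
  shows "guarded t \<Longrightarrow> inv_free t \<Longrightarrow> eval \<rho> X t \<subseteq> B\<^sup>*"
proof (induction t)
  case (CInt a b)
  then show ?case by (cases "guarded a") auto
next
  case (Plus a)
  then have "eval \<rho> X a \<subseteq> B\<^sup>*" by simp
  then have "(eval \<rho> X a)\<^sup>* \<subseteq> B\<^sup>*" by (rule rtrancl_subset_rtrancl)
  then show ?case by (auto dest: trancl_into_rtrancl)
next
  case (Star a)
  then have "eval \<rho> X a \<subseteq> B\<^sup>*" by simp
  then have "(eval \<rho> X a)\<^sup>* \<subseteq> B\<^sup>*" by (rule rtrancl_subset_rtrancl)
  then show ?case by (auto dest: trancl_into_rtrancl)
next
  case (Seq a b)
  then have "eval \<rho> X a O eval \<rho> X b \<subseteq> B\<^sup>* O B\<^sup>*" by (intro relcomp_mono) auto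
  then show ?case by simp
qed (use base fences env in auto)

lemma fence_subset_bb:
  assumes "wf_exec X"
  shows "fence X f \<subseteq> bb X"
  using assms unfolding wf_exec_def bb_def by blast

lemma kleene_subset_rtrancl_bb:
  assumes common: "common M TYPE('e execution)" and wf: "wf_exec X"
  shows "kleene M (X :: 'e execution) k m \<subseteq> (bb X)\<^sup>*"
proof (induction k arbitrary: m)
  case 0
  then show ?case by simp
next
  case (Suc k)
  show ?case
  proof (cases "map_of (defs M) m")
    case None
    then show ?thesis by simp
  next
    case (Some t)
    then have def_t: "(m, t) \<in> set (defs M)" by (rule map_of_SomeD)
    have "guarded t" and "inv_free t \<or> t = fr_term"
      using common def_t unfolding common_def by auto
    moreover have "eval (kleene M X k) X fr_term \<subseteq> (bb X)\<^sup>*"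
      by (auto simp: fr_term_def fr_def bb_def)
    moreover have "inv_free t \<Longrightarrow> eval (kleene M X k) X t \<subseteq> (bb X)\<^sup>*"
      using \<open>guarded t\<close> fence_subset_bb[OF wf] Suc.IH
      by (intro eval_subset_rtrancl) (auto simp: bb_def)
    ultimately show ?thesis using Some by auto
  qed
qed

theorem mainTheorem3:
  fixes M :: model and X :: "'e execution" and n :: string and e1 e2 :: 'e
  assumes "common M TYPE('e execution)"
    and "wf_exec X"
    and "n \<in> fst ` set (defs M)"
    and "e1 \<in> ev X" and "e2 \<in> ev X"
    and "(e1, e2) \<in> model_rel M X n"
  shows "(e1, e2) \<in> (bb X)\<^sup>*"
  using assms(6) kleene_subset_rtrancl_bb[OF assms(1,2)]
  unfolding model_rel_def model_env_def by blast

end
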